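(* Let $k\ge 2$, $n=2k$, $\mathcal{N}=\{0,1,\dots,n-1\}$, and let $A,B,C$ be the sets of elements of $\mathcal{N}$ congruent to $0,1,2 \pmod 3$ respectively. Let $j\in\{0,1,2\}$ with $\sum_{t\in\mathcal{N}}t\equiv j\pmod 3$. Let $X$ be a $(k-1)$-subset of $\mathcal{N}$ with $A\not\subset X$, $B\not\subset X$ and $C\not\subset X$. Then $X\in\mathcal{D}(\mathcal{R}_i)$ for every $i\in\{0,1,2\}$ with $i\equiv 1-j\pmod 3$ or $i\equiv 2-j\pmod 3$; that is, for each such $i$ there exist $X',Y'\in\mathcal{R}_i$ with $X=X'\setminus Y'$.
   Context: For $i\in\{0,1,2\}$, $\mathcal{R}_i=\{\{x_1,\dots,x_k\}\in\binom{\mathcal{N}}{k} : x_1+\dots+x_k\equiv i \pmod 3\}$, where $\binom{\mathcal{N}}{k}$ is the family of $k$-element subsets of $\mathcal{N}$. For a family $\mathcal{F}$, $\mathcal{D}(\mathcal{F})=\{F\setminus F' : F,F'\in\mathcal{F}\}$. *)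

theory Defs
  imports Main
begin

definition R :: "nat set \<Rightarrow> nat \<Rightarrow> nat \<Rightarrow> nat set set" where
  "R N k i = {S. S \<subseteq> N \<and> card S = k \<and> \<Sum>S mod 3 = i}"

definition D :: "'a set set \<Rightarrow> 'a set set" where
  "D F = {S - S' | S S'. S \<in> F \<and> S' \<in> F}"

end

theory Submission
  imports Defs
begin

text \<open>Let \<open>s = \<Sum>X\<close> and \<open>T = \<Sum>N\<close>. The complement of \<open>X\<close> has \<open>|X| + 2\<close> elements, so
  adding one of them \<open>a\<close> to \<open>X\<close> and deleting another one \<open>b\<close> from the complement gives
  two sets \<open>X' = X \<union> {a}\<close> and \<open>Y' = (N - X) - {b}\<close> of equal size with \<open>X = X' - Y'\<close>.
  Their sums are \<open>s + a\<close> and \<open>T - s - b\<close>, which are both \<open>i\<close> mod 3 iff \<open>a \<equiv> i - s\<close> and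
  \<open>b \<equiv> T - s - i\<close> (below \<open>-x\<close> is written \<open>2x\<close> to avoid truncated subtraction on \<open>nat\<close>).
  These residues differ exactly when \<open>i + T \<noteq> 0\<close> mod 3, and then suitable \<open>a \<noteq> b\<close>
  exist as soon as the complement of \<open>X\<close> meets every residue class.\<close>

lemma mod3_residues_distinct:
  fixes i s T :: nat
  assumes "(i + T) mod 3 \<noteq> 0"
  shows "(i + 2 * s) mod 3 \<noteq> (T + 2 * s + 2 * i) mod 3"
proof
  assume "(i + 2 * s) mod 3 = (T + 2 * s + 2 * i) mod 3"
  then have "(i + 2 * s + (s + 2 * i)) mod 3 = (T + 2 * s + 2 * i + (s + 2 * i)) mod 3"
    by (metis mod_add_left_eq)
  then have "(3 * (i + s)) mod 3 = (i + T + 3 * (s + i)) mod 3"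
    by (simp add: algebra_simps)
  then have "(i + T) mod 3 = 0"
    by (simp only: mod_mult_self2 mod_mult_self1_is_0)
  with assms show False ..
qed

lemma sum_insert_mod3:
  fixes a i s :: nat
  assumes "i < 3" and "a mod 3 = (i + 2 * s) mod 3"
  shows "(s + a) mod 3 = i"
proof -
  have "(s + a) mod 3 = (s + (i + 2 * s)) mod 3"
    using assms(2) by (metis mod_add_right_eq)
  also have "\<dots> = (i + 3 * s) mod 3"
    by (simp add: algebra_simps)
  also have "\<dots> = i"
    using assms(1) by (simp only: mod_mult_self2 mod_less)
  finally show ?thesis .
qed

lemma sum_complement_mod3:
  fixes b i s y T :: nat
  assumes "i < 3" and "y + b + s = T" and "b mod 3 = (T + 2 * s + 2 * i) mod 3"
  shows "y mod 3 = i"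
proof -
  have "(2 * b) mod 3 = (2 * (T + 2 * s + 2 * i)) mod 3"
    using assms(3) by (metis mod_mult_right_eq)
  have "y mod 3 = (y + 3 * (b + s)) mod 3"
    by (simp only: mod_mult_self2)
  also have "\<dots> = (2 * b + (T + 2 * s)) mod 3"
    by (simp add: algebra_simps flip: assms(2))
  also have "\<dots> = (2 * (T + 2 * s + 2 * i) + (T + 2 * s)) mod 3"
    using \<open>(2 * b) mod 3 = _\<close> by (metis mod_add_left_eq)
  also have "\<dots> = (i + 3 * (T + 2 * s + i)) mod 3"
    by (simp add: algebra_simps)
  also have "\<dots> = i"
    using assms(1) by (simp only: mod_mult_self2 mod_less)
  finally show ?thesis .
qed

lemma diff_of_two_R_members:
  fixes N X :: "nat set" and i :: nat
  assumes "finite N" and "X \<subseteq> N" and "card N = 2 * card X + 2"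
    and residues: "\<And>r. r < 3 \<Longrightarrow> \<not> {t\<in>N. t mod 3 = r} \<subseteq> X"
    and "i < 3" and "(i + \<Sum>N) mod 3 \<noteq> 0"
  shows "\<exists>X' Y'. X' \<in> R N (card X + 1) i \<and> Y' \<in> R N (card X + 1) i \<and> X = X' - Y'"
proof -
  define s where "s = \<Sum>X"
  obtain a where a: "a \<in> N - X" "a mod 3 = (i + 2 * s) mod 3"
    using residues[of "(i + 2 * s) mod 3"] by auto
  obtain b where b: "b \<in> N - X" "b mod 3 = (\<Sum>N + 2 * s + 2 * i) mod 3"
    using residues[of "(\<Sum>N + 2 * s + 2 * i) mod 3"] by auto
  have "a \<noteq> b"
    using a(2) b(2) mod3_residues_distinct[OF assms(6)] by metis
  have "finite X"
    using assms(1,2) finite_subset by blast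
  define X' where "X' = insert a X"
  define Y' where "Y' = N - X - {b}"
  have "X = X' - Y'"
    unfolding X'_def Y'_def using a(1) \<open>a \<noteq> b\<close> by blast
  moreover have "X' \<in> R N (card X + 1) i"
  proof -
    have "\<Sum>X' = s + a"
      unfolding X'_def s_def using \<open>finite X\<close> a(1) by simp
    then have "\<Sum>X' mod 3 = i"
      using sum_insert_mod3[OF assms(5) a(2)] by simp
    moreover have "X' \<subseteq> N" and "card X' = card X + 1"
      unfolding X'_def using \<open>finite X\<close> a(1) assms(2) by auto
    ultimately show ?thesis
      unfolding R_def by blast
  qed
  moreover have "Y' \<in> R N (card X + 1) i"
  proof -
    have "card (N - X) = card X + 2"
      using card_Diff_subset[OF \<open>finite X\<close> assms(2)] assms(3) by simp
    then have "card Y' = card X + 1"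
      unfolding Y'_def using b(1) by simp
    have "\<Sum>(N - X) + s = \<Sum>N"
      unfolding s_def using sum.subset_diff[OF assms(2,1), of "\<lambda>x. x"] by simp
    moreover have "\<Sum>Y' + b = \<Sum>(N - X)"
      unfolding Y'_def using b(1) assms(1) by (simp add: sum.remove[of "N - X" b])
    ultimately have "\<Sum>Y' + b + s = \<Sum>N"
      by simp
    then have "\<Sum>Y' mod 3 = i"
      using sum_complement_mod3[OF assms(5) _ b(2)] by blast
    with \<open>card Y' = card X + 1\<close> show ?thesis
      unfolding R_def Y'_def by auto
  qed
  ultimately show ?thesis
    by blast
qed

theorem lemma2p1:
  fixes k n j :: nat and X :: "nat set"
  assumes "k \<ge> 2" and "n = 2 * k"
    and "j \<in> {0,1,2}" and "(\<Sum>t\<in>{0..<n}. t) mod 3 = j"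
    and "X \<subseteq> {0..<n}" and "card X = k - 1"
    and "\<not> {t\<in>{0..<n}. t mod 3 = 0} \<subseteq> X"
    and "\<not> {t\<in>{0..<n}. t mod 3 = 1} \<subseteq> X"
    and "\<not> {t\<in>{0..<n}. t mod 3 = 2} \<subseteq> X"
  shows "\<forall>i\<in>{0,1,2}. ((int i - (1 - int j)) mod 3 = 0 \<or> (int i - (2 - int j)) mod 3 = 0)
           \<longrightarrow> X \<in> D (R {0..<n} k i) \<and>
               (\<exists>X' Y'. X' \<in> R {0..<n} k i \<and> Y' \<in> R {0..<n} k i \<and> X = X' - Y')"
proof (intro ballI impI)
  fix i :: nat
  assume i: "i \<in> {0,1,2}"
    and ij: "(int i - (1 - int j)) mod 3 = 0 \<or> (int i - (2 - int j)) mod 3 = 0"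
  have "(i + j) mod 3 \<noteq> 0"
  proof -
    have "i = 0 \<or> i = 1 \<or> i = 2" and "j = 0 \<or> j = 1 \<or> j = 2"
      using i assms(3) by auto
    with ij show ?thesis
      by (elim disjE) simp_all
  qed
  then have "(i + \<Sum>{0..<n}) mod 3 \<noteq> 0"
    using assms(4) mod_add_right_eq[of i "\<Sum>{0..<n}" 3] by simp
  moreover have "\<not> {t\<in>{0..<n}. t mod 3 = r} \<subseteq> X" if "r < 3" for r
  proof -
    have "r \<in> {0, 1, 2}"
      using that by auto
    then show ?thesis
      using assms(7-9) by auto
  qed
  moreover have "card {0..<n} = 2 * card X + 2" and "card X + 1 = k"
    using assms(1,2,6) by auto
  ultimately have "\<exists>X' Y'. X' \<in> R {0..<n} k i \<and> Y' \<in> R {0..<n} k i \<and> X = X' - Y'"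
    using diff_of_two_R_members[OF finite_atLeastLessThan assms(5)] i by auto
  then show "X \<in> D (R {0..<n} k i) \<and>
      (\<exists>X' Y'. X' \<in> R {0..<n} k i \<and> Y' \<in> R {0..<n} k i \<and> X = X' - Y')"
    unfolding D_def by blast
qed

end
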